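(* Let $d=\infty$ and $C>0$. Then $$\mathcal P_d\subsetneq\mathcal A_d=T^\uparrow_{d,C}(\mathcal S_{d,C})\subsetneq\mathcal N_d\subsetneq\mathcal M_d,$$ and $T^\uparrow_{d,C}$ is a bijection from $\mathcal S_{d,C}$ onto $\mathcal A_d$ with inverse $T^\downarrow_{d,C}|_{\mathcal A_d}$. Moreover $T^\downarrow_{d,C}(\mathcal M_d)=\mathcal S_{d,C}$, and for every ${\boldsymbol\gamma}\in\mathcal M_d$ one has $(T^\uparrow_{d,C}\circ T^\downarrow_{d,C}){\boldsymbol\gamma}\le{\boldsymbol\gamma}$, with equality if and only if ${\boldsymbol\gamma}\in\mathcal A_d$.
   Context: Let $d\in\mathbb N\cup\{\infty\}$. Write $[d]=\{1,\dots,d\}$ if $d\in\mathbb N$ and $[d]=\mathbb N$ if $d=\infty$; for $s\in\mathbb N$, $[s]=\{1,\dots,s\}$. Let $\mathcal U_d$ be the set of all finite subsets of $[d]$. For families ${\boldsymbol\gamma}=(\gamma_u)_{u\in\mathcal U_d}$ of real numbers, inequalities and limits are meant componentwise, and $\mathbf 0$ denotes the zero family. The set of weights is $\mathcal W_d=\{{\boldsymbol\gamma}\in\mathbb R^{\mathcal U_d}:{\boldsymbol\gamma}\ge\mathbf 0\}$. For $v\in\mathcal U_d$ the difference operator $\Delta_v$ on $\mathbb R^{\mathcal U_d}$ is $(\Delta_v{\boldsymbol\gamma})_u=\sum_{w\subseteq v}(-1)^{|w|}\gamma_{u\cup w}$. Weights are completely monotone if $\Delta_v{\boldsymbol\gamma}\ge\mathbf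 0$ for every $v\in\mathcal U_d$; $\mathcal M_d$ denotes the set of completely monotone weights. For $C>0$ let $\mathcal S_{d,C}=\{{\boldsymbol\gamma}\in\mathcal W_d:\sum_{v\in\mathcal U_d}C^{2|v|}\gamma_v<\infty\}$, and let $T^\uparrow_{d,C}\colon\mathcal S_{d,C}\to\mathcal W_d$, $(T^\uparrow_{d,C}{\boldsymbol\gamma})_u=\sum_{v\in\mathcal U_d,\,u\subseteq v}C^{2|v|}\gamma_v$. Define $T^\downarrow_{d,C}\colon\mathcal M_d\to\mathcal W_d$ by $(T^\downarrow_{d,C}{\boldsymbol\gamma})_u=C^{-2|u|}\lim_{s\to\infty}(\Delta_{[s]\setminus u}{\boldsymbol\gamma})_u$ for $d=\infty$ (the sequence is non-increasing in $[0,\gamma_u]$ for ${\boldsymbol\gamma}\in\mathcal M_d$). For $d=\infty$, with the convention $\max\emptyset=0$: $\mathcal N_d=\{{\boldsymbol\gamma}\in\mathcal M_d:\ \gamma_u\to0 \text{ as } \max u\to\infty\}$ (i.e. for every $\varepsilon>0$ there is $N$ with $\gamma_u<\varepsilon$ whenever $\max u\ge N$); $\mathcal P_d=\{{\boldsymbol\gamma}\in\mathcal M_d:\sum_{v\in\mathcal U_d}\gamma_v<\infty\}$; and $\mathcal A_d=\{{\boldsymbol\gamma}\in\mathcal M_d:\lim_{r\to\infty}\lim_{s\to\infty}\Delta_{[s]\setminus[r]}{\boldsymbol\gamma}={\boldsymbol\gamma}\}$ (componentwise iterated limits). *)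

theory Defs
  imports "HOL-Analysis.Analysis"
begin

text \<open>Index set [d] = N = {1,2,...}; U = finite subsets of {1,2,...}.
  Families indexed by U are represented as functions nat set => real that vanish
  outside U (so componentwise equality is function equality).\<close>

definition U_inf :: "nat set set" where
  "U_inf = {u. finite u \<and> 0 \<notin> u}"

definition W_inf :: "(nat set \<Rightarrow> real) set" where
  "W_inf = {g. (\<forall>u\<in>U_inf. 0 \<le> g u) \<and> (\<forall>u. u \<notin> U_inf \<longrightarrow> g u = 0)}"

definition Delta :: "nat set \<Rightarrow> (nat set \<Rightarrow> real) \<Rightarrow> (nat set \<Rightarrow> real)" where
  "Delta v g = (\<lambda>u. if u \<in> U_inf then (\<Sum>w\<in>Pow v. (-1) ^ card w * g (u \<union> w)) else 0)"

definition M_inf :: "(nat set \<Rightarrow> real) set" where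
  "M_inf = {g \<in> W_inf. \<forall>v\<in>U_inf. \<forall>u\<in>U_inf. 0 \<le> Delta v g u}"

definition S_inf :: "real \<Rightarrow> (nat set \<Rightarrow> real) set" where
  "S_inf C = {g \<in> W_inf. (\<lambda>v. C ^ (2 * card v) * g v) summable_on U_inf}"

definition Tup :: "real \<Rightarrow> (nat set \<Rightarrow> real) \<Rightarrow> (nat set \<Rightarrow> real)" where
  "Tup C g = (\<lambda>u. if u \<in> U_inf then (\<Sum>\<^sub>\<infinity>v\<in>{v\<in>U_inf. u \<subseteq> v}. C ^ (2 * card v) * g v) else 0)"

definition Tdown :: "real \<Rightarrow> (nat set \<Rightarrow> real) \<Rightarrow> (nat set \<Rightarrow> real)" where
  "Tdown C g = (\<lambda>u. if u \<in> U_inf then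
      (1 / C ^ (2 * card u)) * lim (\<lambda>s. Delta ({1..s} - u) g u) else 0)"

definition maxU :: "nat set \<Rightarrow> nat" where
  "maxU u = (if u = {} then 0 else Max u)"

definition N_inf :: "(nat set \<Rightarrow> real) set" where
  "N_inf = {g \<in> M_inf. \<forall>\<epsilon>>0. \<exists>N. \<forall>u\<in>U_inf. N \<le> maxU u \<longrightarrow> g u < \<epsilon>}"

definition P_inf :: "(nat set \<Rightarrow> real) set" where
  "P_inf = {g \<in> M_inf. g summable_on U_inf}"

definition A_inf :: "(nat set \<Rightarrow> real) set" where
  "A_inf = {g \<in> M_inf. \<forall>u\<in>U_inf. \<exists>L :: nat \<Rightarrow> real.
      (\<forall>r. (\<lambda>s. Delta ({1..s} - {1..r}) g u) \<longlonglongrightarrow> L r) \<and> L \<longlonglongrightarrow> g u}"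

end

theory Submission
  imports Defs
begin

(* For completely monotone g, each sequence n |-> Delta_([n]-K) g u is non-increasing and
   non-negative; call its limit limdiff K g u.  The Moebius identity
     Delta_(S-R) g u = sum of Delta_(S-v) g v over u <= v <= R
   passes to the limit as  limdiff [r] g u = sum of limdiff v g v over u <= v <= [r].
   Since limdiff v g v = C^(2|v|) (Tdown g) v, the left side is the inner limit in the definition
   of A and the right side is a partial upward sum of Tup (Tdown g) at u.  Hence Tup (Tdown g) <= g,
   with equality exactly on A.  Conversely, the differences of Tup h at u are sums of C^(2|v|) h v
   over the supersets v of u avoiding the differencing set, which forces Tdown (Tup h) = h.
   The strict inclusions are witnessed by the product weights prod_(i in u) a i with a = 1 and
   a i = 1/(i+1), and by Tup of a weight living on the intervals [n]. *)

(* Keep {1..n} as written: with One_nat_def the simplifier turns it into {Suc 0..n}, which the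
   interval lemmas below would no longer match. *)
declare One_nat_def [simp del]

section \<open>Finite differences of set functions\<close>

definition fdiff :: "'a set \<Rightarrow> ('a set \<Rightarrow> 'b::comm_ring_1) \<Rightarrow> 'a set \<Rightarrow> 'b" where
  "fdiff A g u = (\<Sum>w\<in>Pow A. (-1) ^ card w * g (u \<union> w))"

lemma Delta_eq_fdiff: "u \<in> U_inf \<Longrightarrow> Delta v g u = fdiff v g u"
  by (simp add: Delta_def fdiff_def)

lemma fdiff_empty [simp]: "fdiff {} g u = g u"
  by (simp add: fdiff_def)

lemma fdiff_insert:
  assumes "finite A" "i \<notin> A"
  shows "fdiff (insert i A) g u = fdiff A g u - fdiff A g (insert i u)"
proof -
  have inj: "inj_on (insert i) (Pow A)"
    using assms(2) by (intro inj_onI) (metis PowD insert_ident subsetD)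
  have "fdiff (insert i A) g u = fdiff A g u + (\<Sum>w\<in>insert i ` Pow A. (-1) ^ card w * g (u \<union> w))"
    unfolding fdiff_def Pow_insert using assms by (subst sum.union_disjoint) auto
  also have "(\<Sum>w\<in>insert i ` Pow A. (-1) ^ card w * g (u \<union> w))
      = (\<Sum>w\<in>Pow A. - ((-1) ^ card w * g (insert i u \<union> w)))"
  proof (subst sum.reindex[OF inj], intro sum.cong refl)
    fix w assume "w \<in> Pow A"
    with assms have "finite w" "i \<notin> w" by (auto dest: finite_subset)
    then show "((\<lambda>w. (-1) ^ card w * g (u \<union> w)) \<circ> insert i) w = - ((-1) ^ card w * g (insert i u \<union> w))"
      by simp
  qed
  finally show ?thesis by (simp add: fdiff_def sum_negf)
qed

lemma fdiff_eq_0_if_overlap: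
  assumes "finite A" "i \<in> A" "i \<in> u"
  shows "fdiff A g u = 0"
proof -
  have "fdiff (insert i (A - {i})) g u = fdiff (A - {i}) g u - fdiff (A - {i}) g (insert i u)"
    using assms(1) by (intro fdiff_insert) auto
  with assms(2,3) show ?thesis by (simp add: insert_absorb)
qed

lemma fdiff_moebius:
  assumes "finite S" "u \<subseteq> R" "R \<subseteq> S"
  shows "fdiff (S - R) g u = (\<Sum>v | u \<subseteq> v \<and> v \<subseteq> R. fdiff (S - v) g v)"
  using assms
proof (induction "card (R - u)" arbitrary: R u rule: less_induct)
  case less
  have "finite R" using less.prems finite_subset by blast
  show ?case
  proof (cases "R = u")
    case True
    then have "{v. u \<subseteq> v \<and> v \<subseteq> R} = {u}" by auto
    with True show ?thesis by simp
  next
    case False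
    then obtain i where i: "i \<in> R" "i \<notin> u" using less.prems by blast
    let ?R' = "R - {i}"
    have "card (?R' - u) < card (R - u)"
      using i \<open>finite R\<close> by (intro psubset_card_mono) auto
    moreover have "card (R - insert i u) < card (R - u)"
      using i \<open>finite R\<close> by (intro psubset_card_mono) auto
    ultimately have IH: "fdiff (S - ?R') g u = (\<Sum>v | u \<subseteq> v \<and> v \<subseteq> ?R'. fdiff (S - v) g v)"
        "fdiff (S - R) g (insert i u) = (\<Sum>v | insert i u \<subseteq> v \<and> v \<subseteq> R. fdiff (S - v) g v)"
      using less.hyps less.prems i by auto
    have "S - ?R' = insert i (S - R)" using i less.prems by auto
    then have step: "fdiff (S - R) g u = fdiff (S - ?R') g u + fdiff (S - R) g (insert i u)"
      using less.prems i fdiff_insert[of "S - R" i g u] by simp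
    have split: "{v. u \<subseteq> v \<and> v \<subseteq> R}
        = {v. u \<subseteq> v \<and> v \<subseteq> ?R'} \<union> {v. insert i u \<subseteq> v \<and> v \<subseteq> R}"
      using i by auto
    have "finite {v. u \<subseteq> v \<and> v \<subseteq> ?R'}" "finite {v. insert i u \<subseteq> v \<and> v \<subseteq> R}"
      using \<open>finite R\<close> by (auto intro: finite_subset[of _ "Pow R"])
    then show ?thesis
      unfolding step IH split by (subst sum.union_disjoint) auto
  qed
qed

lemma fdiff_lower_bound:
  fixes g :: "'a set \<Rightarrow> real"
  assumes "finite A" "\<And>w. w \<subseteq> A \<Longrightarrow> 0 \<le> g (u \<union> w)"
  shows "g u - (\<Sum>w\<in>Pow A - {{}}. g (u \<union> w)) \<le> fdiff A g u"
proof -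
  have "fdiff A g u = g u + (\<Sum>w\<in>Pow A - {{}}. (-1) ^ card w * g (u \<union> w))"
    using assms(1) by (simp add: fdiff_def sum.remove[of "Pow A" "{}"])
  moreover have "(\<Sum>w\<in>Pow A - {{}}. - g (u \<union> w)) \<le> (\<Sum>w\<in>Pow A - {{}}. (-1) ^ card w * g (u \<union> w))"
    using assms(2) by (intro sum_mono) (auto simp: minus_one_power_iff)
  ultimately show ?thesis by (simp add: sum_negf)
qed

section \<open>Finite sets of positive integers\<close>

lemma subset_atLeastAtMost_in_U_inf: "v \<subseteq> {m..n} \<Longrightarrow> 0 < m \<Longrightarrow> v \<in> U_inf"
  using finite_subset[of v "{m..n}"] by (auto simp: U_inf_def)

lemma atLeastAtMost_Diff_in_U_inf [simp]: "0 < m \<Longrightarrow> {m..n} - K \<in> U_inf"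
  by (auto intro: subset_atLeastAtMost_in_U_inf)

lemma insert_in_U_inf: "u \<in> U_inf \<Longrightarrow> i \<noteq> 0 \<Longrightarrow> insert i u \<in> U_inf"
  by (auto simp: U_inf_def)

lemma eventually_subset_atLeastAtMost:
  assumes "u \<in> U_inf"
  shows "\<forall>\<^sub>F n in sequentially. u \<subseteq> {1..n}"
proof -
  have "u \<subseteq> {1..n}" if "Max (insert 0 u) \<le> n" for n
  proof
    fix x assume "x \<in> u"
    with assms have "0 < x" "x \<le> Max (insert 0 u)" by (auto simp: U_inf_def intro!: gr0I)
    with that show "x \<in> {1..n}" by (simp add: Suc_le_eq)
  qed
  then show ?thesis unfolding eventually_sequentially by blast
qed

lemma U_inf_eq_UN_Pow: "U_inf = (\<Union>n. Pow {1..n})"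
proof
  show "U_inf \<subseteq> (\<Union>n. Pow {1..n})"
  proof
    fix u assume "u \<in> U_inf"
    then obtain N where "\<forall>n\<ge>N. u \<subseteq> {1..n}"
      using eventually_subset_atLeastAtMost unfolding eventually_sequentially by blast
    then have "u \<in> Pow {1..N}" by simp
    then show "u \<in> (\<Union>n. Pow {1..n})" by blast
  qed
next
  show "(\<Union>n. Pow {1..n}) \<subseteq> U_inf"
  proof
    fix u assume "u \<in> (\<Union>n. Pow {1..n::nat})"
    then obtain n where "u \<subseteq> {1..n}" by blast
    then show "u \<in> U_inf" by (rule subset_atLeastAtMost_in_U_inf) simp
  qed
qed

lemma tendsto_sum_exhausting:
  fixes f :: "'a \<Rightarrow> 'b::{comm_monoid_add, t2_space}"
  assumes "f summable_on X" "\<And>n. finite (F n)" "\<And>n. F n \<subseteq> X" "incseq F" "X \<subseteq> (\<Union>n. F n)"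
  shows "(\<lambda>n. sum f (F n)) \<longlonglongrightarrow> infsum f X"
proof -
  have "filterlim F (finite_subsets_at_top X) sequentially"
    unfolding filterlim_finite_subsets_at_top
  proof (intro allI impI)
    fix Y assume Y: "finite Y \<and> Y \<subseteq> X"
    have "\<forall>\<^sub>F n in sequentially. y \<in> F n" if "y \<in> X" for y
    proof -
      obtain m where "y \<in> F m" using assms(5) \<open>y \<in> X\<close> by blast
      with assms(4) show ?thesis
        unfolding eventually_sequentially by (auto dest: incseqD)
    qed
    with Y have "\<forall>\<^sub>F n in sequentially. \<forall>y\<in>Y. y \<in> F n"
      by (intro eventually_ball_finite) auto
    then show "\<forall>\<^sub>F n in sequentially. finite (F n) \<and> Y \<subseteq> F n \<and> F n \<subseteq> X"
      using assms(2,3) by (auto elim!: eventually_mono)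
  qed
  moreover have "(sum f \<longlongrightarrow> infsum f X) (finite_subsets_at_top X)"
    using assms(1) has_sum_def has_sum_infsum by blast
  ultimately show ?thesis
    by (rule filterlim_compose[rotated])
qed

lemma infsum_outside_Pow_tendsto_0:
  fixes f :: "nat set \<Rightarrow> real"
  assumes "f summable_on U_inf"
  shows "(\<lambda>n. \<Sum>\<^sub>\<infinity>v\<in>U_inf - Pow {1..n}. f v) \<longlonglongrightarrow> 0"
proof -
  have Pow: "Pow {1..n} \<subseteq> U_inf" for n
    by (auto intro: subset_atLeastAtMost_in_U_inf)
  have "(\<lambda>n. sum f (Pow {1..n})) \<longlonglongrightarrow> infsum f U_inf"
  proof (rule tendsto_sum_exhausting[OF assms _ Pow])
    show "incseq (\<lambda>n. Pow {1..n::nat})"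
      by (auto simp: incseq_def)
  qed (simp_all add: U_inf_eq_UN_Pow)
  then have "(\<lambda>n. infsum f U_inf - sum f (Pow {1..n})) \<longlonglongrightarrow> infsum f U_inf - infsum f U_inf"
    by (intro tendsto_diff tendsto_const)
  moreover have "(\<Sum>\<^sub>\<infinity>v\<in>U_inf - Pow {1..n}. f v) = infsum f U_inf - sum f (Pow {1..n})" for n
    using assms Pow summable_on_subset[OF assms Pow] by (subst infsum_Diff) auto
  ultimately show ?thesis by simp
qed

section \<open>Completely monotone weights\<close>

lemma M_inf_fdiff_nonneg: "g \<in> M_inf \<Longrightarrow> v \<in> U_inf \<Longrightarrow> u \<in> U_inf \<Longrightarrow> 0 \<le> fdiff v g u"
  by (simp add: M_inf_def flip: Delta_eq_fdiff)

lemma M_inf_nonneg: "g \<in> M_inf \<Longrightarrow> u \<in> U_inf \<Longrightarrow> 0 \<le> g u"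
  by (simp add: M_inf_def W_inf_def)

lemma M_inf_eq_0: "g \<in> M_inf \<Longrightarrow> u \<notin> U_inf \<Longrightarrow> g u = 0"
  by (simp add: M_inf_def W_inf_def)

lemma decseq_fdiff_atLeastAtMost_Diff:
  assumes "g \<in> M_inf" "u \<in> U_inf"
  shows "decseq (\<lambda>n. fdiff ({1..n} - K) g u)"
proof (rule decseq_SucI)
  fix n
  show "fdiff ({1..Suc n} - K) g u \<le> fdiff ({1..n} - K) g u"
  proof (cases "Suc n \<in> K")
    case True
    then have "{1..Suc n} - K = {1..n} - K" by (auto simp: le_Suc_eq)
    then show ?thesis by simp
  next
    case False
    then have "{1..Suc n} - K = insert (Suc n) ({1..n} - K)" by auto
    moreover have "0 \<le> fdiff ({1..n} - K) g (insert (Suc n) u)"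
      using assms by (intro M_inf_fdiff_nonneg insert_in_U_inf) auto
    ultimately show ?thesis by (simp add: fdiff_insert)
  qed
qed

(* For K = u this is C^(2|u|) (Tdown C g) u; for K = [r] it is the inner limit in the definition of A. *)
definition limdiff :: "nat set \<Rightarrow> (nat set \<Rightarrow> real) \<Rightarrow> nat set \<Rightarrow> real" where
  "limdiff K g u = lim (\<lambda>n. fdiff ({1..n} - K) g u)"

lemma
  assumes "g \<in> M_inf" "u \<in> U_inf"
  shows fdiff_tendsto_limdiff: "(\<lambda>n. fdiff ({1..n} - K) g u) \<longlonglongrightarrow> limdiff K g u"
    and limdiff_nonneg: "0 \<le> limdiff K g u"
    and limdiff_le_fdiff: "limdiff K g u \<le> fdiff ({1..n} - K) g u"
proof -
  have nonneg: "\<forall>n. 0 \<le> fdiff ({1..n} - K) g u"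
    using assms by (auto intro: M_inf_fdiff_nonneg)
  obtain L where L: "(\<lambda>n. fdiff ({1..n} - K) g u) \<longlonglongrightarrow> L" "\<forall>n. L \<le> fdiff ({1..n} - K) g u"
    using decseq_convergent[OF decseq_fdiff_atLeastAtMost_Diff[OF assms] nonneg] by blast
  then have "limdiff K g u = L" by (simp add: limdiff_def limI)
  with L nonneg show "(\<lambda>n. fdiff ({1..n} - K) g u) \<longlonglongrightarrow> limdiff K g u"
    "limdiff K g u \<le> fdiff ({1..n} - K) g u" "0 \<le> limdiff K g u"
    by (auto intro: LIMSEQ_le_const)
qed

lemma limdiff_le: "g \<in> M_inf \<Longrightarrow> u \<in> U_inf \<Longrightarrow> limdiff K g u \<le> g u"
  using limdiff_le_fdiff[of g u K 0] by simp

lemma limdiff_atLeastAtMost_eq_sum: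
  assumes "g \<in> M_inf" "u \<subseteq> {1..r}"
  shows "limdiff {1..r} g u = (\<Sum>v | u \<subseteq> v \<and> v \<subseteq> {1..r}. limdiff v g v)"
proof (rule LIMSEQ_unique)
  have "u \<in> U_inf"
    using assms(2) by (rule subset_atLeastAtMost_in_U_inf) simp
  with assms(1) show "(\<lambda>n. fdiff ({1..n} - {1..r}) g u) \<longlonglongrightarrow> limdiff {1..r} g u"
    by (rule fdiff_tendsto_limdiff)
  have "(\<lambda>n. \<Sum>v | u \<subseteq> v \<and> v \<subseteq> {1..r}. fdiff ({1..n} - v) g v)
      \<longlonglongrightarrow> (\<Sum>v | u \<subseteq> v \<and> v \<subseteq> {1..r}. limdiff v g v)"
    using assms(1) by (intro tendsto_sum fdiff_tendsto_limdiff) (auto intro: subset_atLeastAtMost_in_U_inf)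
  moreover have "\<forall>\<^sub>F n in sequentially.
      (\<Sum>v | u \<subseteq> v \<and> v \<subseteq> {1..r}. fdiff ({1..n} - v) g v) = fdiff ({1..n} - {1..r}) g u"
    unfolding eventually_sequentially using assms(2)
    by (intro exI[of _ r] allI impI fdiff_moebius[symmetric]) auto
  ultimately show "(\<lambda>n. fdiff ({1..n} - {1..r}) g u)
      \<longlonglongrightarrow> (\<Sum>v | u \<subseteq> v \<and> v \<subseteq> {1..r}. limdiff v g v)"
    by (rule Lim_transform_eventually)
qed

lemma sum_limdiff_le:
  assumes "g \<in> M_inf" "u \<in> U_inf" "finite F" "F \<subseteq> {v \<in> U_inf. u \<subseteq> v}"
  shows "(\<Sum>v\<in>F. limdiff v g v) \<le> g u"
proof -
  have "\<forall>\<^sub>F r in sequentially. \<forall>v\<in>insert u F. v \<subseteq> {1..r}"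
    using assms by (intro eventually_ball_finite ballI eventually_subset_atLeastAtMost) auto
  then obtain r where r: "\<forall>v\<in>insert u F. v \<subseteq> {1..r}"
    unfolding eventually_sequentially by blast
  have "finite {v. u \<subseteq> v \<and> v \<subseteq> {1..r}}"
    by (rule finite_subset[of _ "Pow {1..r}"]) auto
  with assms r have "(\<Sum>v\<in>F. limdiff v g v) \<le> (\<Sum>v | u \<subseteq> v \<and> v \<subseteq> {1..r}. limdiff v g v)"
    by (intro sum_mono2 limdiff_nonneg) (auto intro: subset_atLeastAtMost_in_U_inf)
  also have "\<dots> = limdiff {1..r} g u"
    using r by (intro limdiff_atLeastAtMost_eq_sum[symmetric, OF assms(1)]) simp
  also have "\<dots> \<le> g u"
    using assms(1,2) by (rule limdiff_le)
  finally show ?thesis .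
qed

lemma
  assumes "g \<in> M_inf" "u \<in> U_inf"
  shows summable_on_limdiff: "(\<lambda>v. limdiff v g v) summable_on {v \<in> U_inf. u \<subseteq> v}"
    and infsum_limdiff_le: "(\<Sum>\<^sub>\<infinity>v\<in>{v \<in> U_inf. u \<subseteq> v}. limdiff v g v) \<le> g u"
proof -
  show summable: "(\<lambda>v. limdiff v g v) summable_on {v \<in> U_inf. u \<subseteq> v}"
    using assms sum_limdiff_le[OF assms]
    by (intro nonneg_bdd_above_summable_on bdd_aboveI[of _ "g u"] limdiff_nonneg) auto
  show "(\<Sum>\<^sub>\<infinity>v\<in>{v \<in> U_inf. u \<subseteq> v}. limdiff v g v) \<le> g u"
    using sum_limdiff_le[OF assms] by (intro infsum_le_finite_sums[OF summable])
qed

section \<open>The transforms\<close>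

definition scaled :: "real \<Rightarrow> (nat set \<Rightarrow> real) \<Rightarrow> nat set \<Rightarrow> real" where
  "scaled C g v = C ^ (2 * card v) * g v"

lemma scaled_nonneg: "h \<in> W_inf \<Longrightarrow> 0 \<le> scaled C h v"
  by (cases "v \<in> U_inf") (auto simp: scaled_def W_inf_def power_mult)

lemma S_inf_iff: "h \<in> S_inf C \<longleftrightarrow> h \<in> W_inf \<and> scaled C h summable_on U_inf"
  by (simp add: S_inf_def scaled_def[abs_def])

lemma Tdown_eq_limdiff: "u \<in> U_inf \<Longrightarrow> Tdown C g u = limdiff u g u / C ^ (2 * card u)"
  by (simp add: Tdown_def limdiff_def Delta_eq_fdiff)

lemma scaled_Tdown: "C > 0 \<Longrightarrow> u \<in> U_inf \<Longrightarrow> scaled C (Tdown C g) u = limdiff u g u"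
  by (simp add: scaled_def Tdown_eq_limdiff)

lemma Tup_eq_infsum: "Tup C h u = (\<Sum>\<^sub>\<infinity>v\<in>{v \<in> U_inf. u \<subseteq> v}. scaled C h v)"
proof (cases "u \<in> U_inf")
  case False
  have empty: "{v \<in> U_inf. u \<subseteq> v} = {}"
    using False by (auto simp: U_inf_def dest: finite_subset)
  show ?thesis
    unfolding Tup_def empty using False by simp
qed (simp add: Tup_def scaled_def)

lemma Tup_Tdown_eq_infsum:
  "C > 0 \<Longrightarrow> Tup C (Tdown C g) u = (\<Sum>\<^sub>\<infinity>v\<in>{v \<in> U_inf. u \<subseteq> v}. limdiff v g v)"
  unfolding Tup_eq_infsum by (rule infsum_cong) (simp add: scaled_Tdown)

lemma Tup_Tdown_le: "C > 0 \<Longrightarrow> g \<in> M_inf \<Longrightarrow> u \<in> U_inf \<Longrightarrow> Tup C (Tdown C g) u \<le> g u"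
  by (simp add: Tup_Tdown_eq_infsum infsum_limdiff_le)

lemma Tdown_in_S_inf:
  assumes "C > 0" "g \<in> M_inf"
  shows "Tdown C g \<in> S_inf C"
proof -
  have "0 \<le> Tdown C g u" if "u \<in> U_inf" for u
    using that assms by (simp add: Tdown_eq_limdiff limdiff_nonneg)
  then have "Tdown C g \<in> W_inf"
    by (simp add: W_inf_def Tdown_def)
  moreover have "(\<lambda>v. limdiff v g v) summable_on U_inf"
    using summable_on_limdiff[OF assms(2), of "{}"] by (simp add: U_inf_def)
  moreover have "scaled C (Tdown C g) summable_on U_inf \<longleftrightarrow> (\<lambda>v. limdiff v g v) summable_on U_inf"
    by (rule summable_on_cong) (simp add: scaled_Tdown[OF assms(1)])
  ultimately show ?thesis by (simp add: S_inf_iff)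
qed

lemma limdiff_atLeastAtMost_tendsto_Tup_Tdown:
  assumes "C > 0" "g \<in> M_inf" "u \<in> U_inf"
  shows "(\<lambda>r. limdiff {1..r} g u) \<longlonglongrightarrow> Tup C (Tdown C g) u"
proof -
  have "(\<lambda>r. \<Sum>v | u \<subseteq> v \<and> v \<subseteq> {1..r}. limdiff v g v) \<longlonglongrightarrow> Tup C (Tdown C g) u"
    unfolding Tup_Tdown_eq_infsum[OF assms(1)]
  proof (rule tendsto_sum_exhausting[OF summable_on_limdiff[OF assms(2,3)]])
    show "finite {v. u \<subseteq> v \<and> v \<subseteq> {1..r}}" for r
      by (rule finite_subset[of _ "Pow {1..r}"]) auto
    show "{v. u \<subseteq> v \<and> v \<subseteq> {1..r}} \<subseteq> {v \<in> U_inf. u \<subseteq> v}" for r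
      by (auto intro: subset_atLeastAtMost_in_U_inf)
    show "incseq (\<lambda>r. {v. u \<subseteq> v \<and> v \<subseteq> {1..r::nat}})"
      by (auto simp: incseq_def)
    show "{v \<in> U_inf. u \<subseteq> v} \<subseteq> (\<Union>r. {v. u \<subseteq> v \<and> v \<subseteq> {1..r}})"
      by (auto simp: U_inf_eq_UN_Pow)
  qed
  moreover have "\<forall>\<^sub>F r in sequentially.
      (\<Sum>v | u \<subseteq> v \<and> v \<subseteq> {1..r}. limdiff v g v) = limdiff {1..r} g u"
    using eventually_subset_atLeastAtMost[OF assms(3)]
    by eventually_elim (rule limdiff_atLeastAtMost_eq_sum[symmetric, OF assms(2)])
  ultimately show ?thesis by (rule Lim_transform_eventually)
qed

lemma A_inf_iff_limdiff:
  assumes "g \<in> M_inf"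
  shows "g \<in> A_inf \<longleftrightarrow> (\<forall>u\<in>U_inf. (\<lambda>r. limdiff {1..r} g u) \<longlonglongrightarrow> g u)"
proof -
  have "(\<forall>r. (\<lambda>n. Delta ({1..n} - {1..r}) g u) \<longlonglongrightarrow> L r) \<longleftrightarrow> L = (\<lambda>r. limdiff {1..r} g u)"
    if u: "u \<in> U_inf" for u L
  proof -
    have "(\<lambda>n. Delta ({1..n} - {1..r}) g u) \<longlonglongrightarrow> l \<longleftrightarrow> l = limdiff {1..r} g u" for r l
      unfolding Delta_eq_fdiff[OF u] using fdiff_tendsto_limdiff[OF assms u] LIMSEQ_unique by blast
    then show ?thesis by (auto simp: fun_eq_iff)
  qed
  with assms show ?thesis by (auto simp: A_inf_def)
qed

lemma A_inf_iff_Tup_Tdown: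
  assumes "C > 0" "g \<in> M_inf"
  shows "g \<in> A_inf \<longleftrightarrow> Tup C (Tdown C g) = g"
proof -
  have "(\<lambda>r. limdiff {1..r} g u) \<longlonglongrightarrow> g u \<longleftrightarrow> Tup C (Tdown C g) u = g u" if "u \<in> U_inf" for u
    using limdiff_atLeastAtMost_tendsto_Tup_Tdown[OF assms that] by (auto intro: LIMSEQ_unique)
  moreover have "Tup C (Tdown C g) u = g u" if "u \<notin> U_inf" for u
    using that M_inf_eq_0[OF assms(2) that] by (simp add: Tup_def)
  ultimately show ?thesis
    unfolding A_inf_iff_limdiff[OF assms(2)] fun_eq_iff by blast
qed

lemma fdiff_Tup:
  assumes "h \<in> S_inf C" "finite A"
  shows "fdiff A (Tup C h) u = (\<Sum>\<^sub>\<infinity>v\<in>{v \<in> U_inf. u \<subseteq> v \<and> v \<inter> A = {}}. scaled C h v)"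
  using assms(2)
proof (induction A arbitrary: u rule: finite_induct)
  case empty
  then show ?case by (simp add: Tup_eq_infsum)
next
  case (insert i A)
  have summable: "scaled C h summable_on X" if "X \<subseteq> U_inf" for X
    using assms(1) that by (auto simp: S_inf_iff intro: summable_on_subset)
  have "fdiff (insert i A) (Tup C h) u = fdiff A (Tup C h) u - fdiff A (Tup C h) (insert i u)"
    using insert.hyps by (rule fdiff_insert)
  also have "\<dots> = infsum (scaled C h) ({v \<in> U_inf. u \<subseteq> v \<and> v \<inter> A = {}}
      - {v \<in> U_inf. insert i u \<subseteq> v \<and> v \<inter> A = {}})"
    unfolding insert.IH by (rule infsum_Diff[symmetric]) (auto intro: summable)
  also have "{v \<in> U_inf. u \<subseteq> v \<and> v \<inter> A = {}} - {v \<in> U_inf. insert i u \<subseteq> v \<and> v \<inter> A = {}}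
      = {v \<in> U_inf. u \<subseteq> v \<and> v \<inter> insert i A = {}}"
    by auto
  finally show ?case .
qed

lemma Tup_in_M_inf:
  assumes "h \<in> S_inf C"
  shows "Tup C h \<in> M_inf"
proof -
  have W: "h \<in> W_inf" using assms by (simp add: S_inf_iff)
  have "0 \<le> fdiff v (Tup C h) u" if "v \<in> U_inf" for u v
    using that assms scaled_nonneg[OF W] by (auto simp: U_inf_def fdiff_Tup intro: infsum_nonneg)
  moreover have "0 \<le> Tup C h u" for u
    using scaled_nonneg[OF W] by (simp add: Tup_eq_infsum infsum_nonneg)
  ultimately show ?thesis
    by (simp add: M_inf_def W_inf_def Delta_eq_fdiff) (simp add: Tup_def)
qed

text \<open>The only superset of \<open>u\<close> inside \<open>[n]\<close> that avoids \<open>[n] - u\<close> is \<open>u\<close> itself; all others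
  lie in the tail outside \<open>Pow [n]\<close>.\<close>
lemma limdiff_Tup:
  assumes "h \<in> S_inf C" "u \<in> U_inf"
  shows "limdiff u (Tup C h) u = scaled C h u"
proof -
  have summable: "scaled C h summable_on X" if "X \<subseteq> U_inf" for X
    using assms(1) that by (auto simp: S_inf_iff intro: summable_on_subset)
  have nonneg: "0 \<le> scaled C h v" for v
    using assms(1) by (simp add: S_inf_iff scaled_nonneg)
  define rest where
    "rest n = (\<Sum>\<^sub>\<infinity>v\<in>{v \<in> U_inf. u \<subseteq> v \<and> v \<inter> ({1..n} - u) = {}} - {u}. scaled C h v)" for n
  have fdiff_eq: "fdiff ({1..n} - u) (Tup C h) u = scaled C h u + rest n" for n
  proof -
    let ?E = "{v \<in> U_inf. u \<subseteq> v \<and> v \<inter> ({1..n} - u) = {}}"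
    have E: "?E = insert u (?E - {u})"
      using assms(2) by auto
    have "fdiff ({1..n} - u) (Tup C h) u = infsum (scaled C h) (insert u (?E - {u}))"
      using assms(1) by (subst E[symmetric]) (simp add: fdiff_Tup)
    also have "\<dots> = scaled C h u + rest n"
      unfolding rest_def by (rule infsum_insert) (auto intro: summable)
    finally show ?thesis .
  qed
  have "rest \<longlonglongrightarrow> 0"
  proof (rule tendsto_sandwich)
    show "\<forall>\<^sub>F n in sequentially. 0 \<le> rest n"
      by (simp add: rest_def infsum_nonneg nonneg)
    show "\<forall>\<^sub>F n in sequentially. rest n \<le> (\<Sum>\<^sub>\<infinity>v\<in>U_inf - Pow {1..n}. scaled C h v)"
      using eventually_subset_atLeastAtMost[OF assms(2)]
    proof eventually_elim
      case (elim n)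
      then show ?case
        unfolding rest_def by (intro infsum_mono2 summable nonneg) auto
    qed
    show "(\<lambda>n. \<Sum>\<^sub>\<infinity>v\<in>U_inf - Pow {1..n}. scaled C h v) \<longlonglongrightarrow> 0"
      using assms(1) by (intro infsum_outside_Pow_tendsto_0) (simp add: S_inf_iff)
  qed simp
  then have "(\<lambda>n. fdiff ({1..n} - u) (Tup C h) u) \<longlonglongrightarrow> scaled C h u"
    unfolding fdiff_eq using tendsto_add[OF tendsto_const] by fastforce
  moreover have "(\<lambda>n. fdiff ({1..n} - u) (Tup C h) u) \<longlonglongrightarrow> limdiff u (Tup C h) u"
    using Tup_in_M_inf[OF assms(1)] assms(2) by (rule fdiff_tendsto_limdiff)
  ultimately show ?thesis
    using LIMSEQ_unique by blast
qed

lemma Tdown_Tup: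
  assumes "C > 0" "h \<in> S_inf C"
  shows "Tdown C (Tup C h) = h"
proof
  fix u
  show "Tdown C (Tup C h) u = h u"
  proof (cases "u \<in> U_inf")
    case True
    then have "scaled C (Tdown C (Tup C h)) u = scaled C h u"
      using assms by (simp add: scaled_Tdown limdiff_Tup)
    with assms(1) show ?thesis by (simp add: scaled_def)
  next
    case False
    with assms(2) show ?thesis by (simp add: Tdown_def S_inf_def W_inf_def)
  qed
qed

lemma Tup_in_N_inf:
  assumes "h \<in> S_inf C"
  shows "Tup C h \<in> N_inf"
proof -
  have summable: "scaled C h summable_on U_inf" and nonneg: "\<And>v. 0 \<le> scaled C h v"
    using assms by (simp_all add: S_inf_iff scaled_nonneg)
  have "\<exists>N. \<forall>u\<in>U_inf. N \<le> maxU u \<longrightarrow> Tup C h u < \<epsilon>" if "\<epsilon> > 0" for \<epsilon>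
  proof -
    obtain N where N: "(\<Sum>\<^sub>\<infinity>v\<in>U_inf - Pow {1..N}. scaled C h v) < \<epsilon>"
      using order_tendstoD(2)[OF infsum_outside_Pow_tendsto_0[OF summable] \<open>\<epsilon> > 0\<close>]
      unfolding eventually_sequentially by blast
    have "Tup C h u < \<epsilon>" if u: "u \<in> U_inf" and "Suc N \<le> maxU u" for u
    proof -
      have "Max u \<in> u" "N < Max u"
        using u \<open>Suc N \<le> maxU u\<close> by (auto simp: U_inf_def maxU_def split: if_splits)
      then have "{v \<in> U_inf. u \<subseteq> v} \<subseteq> U_inf - Pow {1..N}"
        by auto
      then have "Tup C h u \<le> (\<Sum>\<^sub>\<infinity>v\<in>U_inf - Pow {1..N}. scaled C h v)"
        unfolding Tup_eq_infsum by (intro infsum_mono2 summable_on_subset[OF summable] nonneg) auto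
      with N show ?thesis by simp
    qed
    then show ?thesis by blast
  qed
  with Tup_in_M_inf[OF assms] show ?thesis by (simp add: N_inf_def)
qed

lemma A_inf_subset_M_inf: "A_inf \<subseteq> M_inf"
  by (auto simp: A_inf_def)

lemma Tup_in_A_inf: "C > 0 \<Longrightarrow> h \<in> S_inf C \<Longrightarrow> Tup C h \<in> A_inf"
  by (simp add: A_inf_iff_Tup_Tdown Tup_in_M_inf Tdown_Tup)

lemma Tup_Tdown_A_inf: "C > 0 \<Longrightarrow> g \<in> A_inf \<Longrightarrow> Tup C (Tdown C g) = g"
  using A_inf_iff_Tup_Tdown A_inf_subset_M_inf by blast

lemma A_inf_eq_image_Tup:
  assumes "C > 0"
  shows "A_inf = Tup C ` S_inf C"
proof
  show "A_inf \<subseteq> Tup C ` S_inf C"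
  proof
    fix g assume "g \<in> A_inf"
    then have "g = Tup C (Tdown C g)" "Tdown C g \<in> S_inf C"
      using assms A_inf_subset_M_inf by (auto simp: Tup_Tdown_A_inf Tdown_in_S_inf)
    then show "g \<in> Tup C ` S_inf C" by (rule image_eqI)
  qed
qed (use assms Tup_in_A_inf in blast)

lemma image_Tdown_M_inf:
  assumes "C > 0"
  shows "Tdown C ` M_inf = S_inf C"
proof
  show "S_inf C \<subseteq> Tdown C ` M_inf"
  proof
    fix h assume "h \<in> S_inf C"
    then have "h = Tdown C (Tup C h)" "Tup C h \<in> M_inf"
      using assms by (simp_all add: Tdown_Tup Tup_in_M_inf)
    then show "h \<in> Tdown C ` M_inf" by (rule image_eqI)
  qed
qed (use assms Tdown_in_S_inf in blast)

lemma bij_betw_Tup: "C > 0 \<Longrightarrow> bij_betw (Tup C) (S_inf C) A_inf"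
  unfolding bij_betw_def by (auto simp: A_inf_eq_image_Tup intro: inj_on_inverseI Tdown_Tup)

text \<open>Every \<open>u \<union> w\<close> with \<open>{} \<noteq> w \<subseteq> [n] - [r]\<close> lies outside \<open>Pow [r]\<close>, so the alternating sum
  \<open>\<Delta>\<^bsub>[n]-[r]\<^esub> g u\<close> falls short of \<open>g u\<close> by at most the mass of \<open>g\<close> there.\<close>
lemma fdiff_ge_minus_tail:
  assumes "g \<in> M_inf" "g summable_on U_inf" "u \<subseteq> {1..r}"
  shows "g u - (\<Sum>\<^sub>\<infinity>v\<in>U_inf - Pow {1..r}. g v) \<le> fdiff ({1..n} - {1..r}) g u"
proof -
  let ?A = "{1..n} - {1..r}"
  let ?W = "Pow ?A - {{}}"
  have in_U: "u \<union> w \<in> U_inf" if "w \<subseteq> ?A" for w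
    using assms(3) that by (intro subset_atLeastAtMost_in_U_inf[of _ 1 "max r n"]) (auto simp: subset_iff)
  have nonneg: "0 \<le> g (u \<union> w)" if "w \<subseteq> ?A" for w
    using assms(1) in_U[OF that] by (rule M_inf_nonneg)
  have "inj_on ((\<union>) u) ?W"
    using assms(3) by (intro inj_onI) blast
  then have "(\<Sum>w\<in>?W. g (u \<union> w)) = sum g ((\<union>) u ` ?W)"
    by (simp add: sum.reindex)
  also have "\<dots> \<le> (\<Sum>\<^sub>\<infinity>v\<in>U_inf - Pow {1..r}. g v)"
  proof (rule finite_sum_le_infsum)
    show "(\<union>) u ` ?W \<subseteq> U_inf - Pow {1..r}"
    proof (rule image_subsetI)
      fix w assume "w \<in> ?W"
      then show "u \<union> w \<in> U_inf - Pow {1..r}"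
        using in_U by blast
    qed
  qed (use assms in \<open>auto intro: summable_on_subset M_inf_nonneg\<close>)
  finally show ?thesis
    using fdiff_lower_bound[of ?A g u, OF _ nonneg] by simp
qed

lemma P_inf_subset_A_inf: "P_inf \<subseteq> A_inf"
proof
  fix g assume "g \<in> P_inf"
  then have M: "g \<in> M_inf" and summable: "g summable_on U_inf" by (auto simp: P_inf_def)
  have "(\<lambda>r. limdiff {1..r} g u) \<longlonglongrightarrow> g u" if u: "u \<in> U_inf" for u
  proof (rule tendsto_sandwich)
    show "\<forall>\<^sub>F r in sequentially. limdiff {1..r} g u \<le> g u"
      using M u by (simp add: limdiff_le)
    show "(\<lambda>r. g u - (\<Sum>\<^sub>\<infinity>v\<in>U_inf - Pow {1..r}. g v)) \<longlonglongrightarrow> g u"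
      using tendsto_diff[OF tendsto_const infsum_outside_Pow_tendsto_0[OF summable]] by simp
    show "\<forall>\<^sub>F r in sequentially. g u - (\<Sum>\<^sub>\<infinity>v\<in>U_inf - Pow {1..r}. g v) \<le> limdiff {1..r} g u"
      using eventually_subset_atLeastAtMost[OF u]
    proof eventually_elim
      case (elim r)
      show ?case
        using fdiff_tendsto_limdiff[OF M u]
        by (rule LIMSEQ_le_const) (use fdiff_ge_minus_tail[OF M summable elim] in blast)
    qed
  qed simp
  with M show "g \<in> A_inf" by (simp add: A_inf_iff_limdiff)
qed

section \<open>Separating examples\<close>

definition product_weight :: "(nat \<Rightarrow> real) \<Rightarrow> nat set \<Rightarrow> real" where
  "product_weight a u = (if u \<in> U_inf then \<Prod>i\<in>u. a i else 0)"

lemma fdiff_product_weight: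
  assumes "finite A" "0 \<notin> A" "u \<in> U_inf" "A \<inter> u = {}"
  shows "fdiff A (product_weight a) u = product_weight a u * (\<Prod>j\<in>A. 1 - a j)"
  using assms
proof (induction A arbitrary: u rule: finite_induct)
  case empty
  then show ?case by simp
next
  case (insert i A)
  have "insert i u \<in> U_inf" "finite u" "i \<notin> u"
    using insert.prems by (auto simp: U_inf_def)
  then have "product_weight a (insert i u) = a i * product_weight a u"
    using insert.prems by (simp add: product_weight_def)
  moreover have "fdiff (insert i A) (product_weight a) u
      = fdiff A (product_weight a) u - fdiff A (product_weight a) (insert i u)"
    using insert.hyps by (rule fdiff_insert)
  ultimately show ?case
    using insert \<open>insert i u \<in> U_inf\<close> by (simp add: algebra_simps)
qed

lemma product_weight_in_M_inf:
  assumes "\<And>i. 0 \<le> a i" "\<And>i. a i \<le> 1"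
  shows "product_weight a \<in> M_inf"
proof -
  have W: "product_weight a \<in> W_inf"
    using assms by (auto simp: W_inf_def product_weight_def intro: prod_nonneg)
  have "0 \<le> fdiff v (product_weight a) u" if "v \<in> U_inf" "u \<in> U_inf" for u v
  proof (cases "v \<inter> u = {}")
    case True
    with that have "fdiff v (product_weight a) u = product_weight a u * (\<Prod>j\<in>v. 1 - a j)"
      by (intro fdiff_product_weight) (auto simp: U_inf_def)
    also have "\<dots> \<ge> 0"
      using W that assms by (intro mult_nonneg_nonneg prod_nonneg) (auto simp: W_inf_def)
    finally show ?thesis .
  next
    case False
    then obtain i where "i \<in> v" "i \<in> u" by blast
    with that have "fdiff v (product_weight a) u = 0"
      by (intro fdiff_eq_0_if_overlap) (auto simp: U_inf_def)
    then show ?thesis by simp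
  qed
  with W show ?thesis by (simp add: M_inf_def Delta_eq_fdiff)
qed

lemma product_weight_one_notin_N_inf: "product_weight (\<lambda>_. 1) \<notin> N_inf"
proof
  assume "product_weight (\<lambda>_. 1) \<in> N_inf"
  then obtain N where N: "\<forall>u\<in>U_inf. N \<le> maxU u \<longrightarrow> product_weight (\<lambda>_. 1) u < 1"
    unfolding N_inf_def using zero_less_one by blast
  have "{Suc N} \<in> U_inf" "N \<le> maxU {Suc N}"
    by (simp_all add: U_inf_def maxU_def)
  with N show False by (auto simp: product_weight_def)
qed

lemma prod_one_minus_inverse_Suc:
  assumes "r \<le> n"
  shows "(\<Prod>j\<in>{1..n} - {1..r}. 1 - 1 / (real j + 1)) = (real r + 1) / (real n + 1)"
  using assms
proof (induction n rule: dec_induct)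
  case (step n)
  then have "{1..Suc n} - {1..r} = insert (Suc n) ({1..n} - {1..r})" by auto
  with step show ?case by (simp add: field_simps)
qed simp

lemma product_weight_inverse_Suc_in_N_inf: "product_weight (\<lambda>i. 1 / (real i + 1)) \<in> N_inf"
proof -
  let ?g = "product_weight (\<lambda>i. 1 / (real i + 1))"
  have "\<exists>N. \<forall>u\<in>U_inf. N \<le> maxU u \<longrightarrow> ?g u < \<epsilon>" if "\<epsilon> > 0" for \<epsilon>
  proof -
    obtain N :: nat where N: "1 / \<epsilon> < real N" "0 < N"
      using reals_Archimedean2[of "max 1 (1 / \<epsilon>)"] by (auto intro: gr0I)
    have "?g u < \<epsilon>" if u: "u \<in> U_inf" and "N \<le> maxU u" for u
    proof -
      have m: "Max u \<in> u" "N \<le> Max u"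
        using u \<open>N \<le> maxU u\<close> \<open>0 < N\<close> by (auto simp: U_inf_def maxU_def split: if_splits)
      have "?g u = 1 / (real (Max u) + 1) * (\<Prod>i\<in>u - {Max u}. 1 / (real i + 1))"
        using u m by (simp add: product_weight_def U_inf_def prod.remove)
      also have "\<dots> \<le> 1 / (real (Max u) + 1)"
        by (rule mult_left_le) (auto intro: prod_le_1)
      also have "\<dots> < \<epsilon>"
      proof -
        have "1 < \<epsilon> * real N"
          using N(1) \<open>\<epsilon> > 0\<close> by (simp add: field_simps)
        also have "\<dots> \<le> \<epsilon> * (real (Max u) + 1)"
          using m(2) \<open>\<epsilon> > 0\<close> by (intro mult_left_mono) auto
        finally show ?thesis by (simp add: field_simps)
      qed
      finally show ?thesis .
    qed
    then show ?thesis by blast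
  qed
  then show ?thesis
    by (simp add: N_inf_def product_weight_in_M_inf)
qed

lemma product_weight_inverse_Suc_notin_A_inf: "product_weight (\<lambda>i. 1 / (real i + 1)) \<notin> A_inf"
proof
  let ?g = "product_weight (\<lambda>i. 1 / (real i + 1))"
  have M: "?g \<in> M_inf" by (simp add: product_weight_in_M_inf)
  have U: "{} \<in> U_inf" by (simp add: U_inf_def)
  have limdiff_0: "limdiff {1..r} ?g {} = 0" for r
  proof (rule LIMSEQ_unique[OF fdiff_tendsto_limdiff[OF M U]])
    have "(real r + 1) * inverse (real (Suc n)) = fdiff ({1..n} - {1..r}) ?g {}" if "r \<le> n" for n
    proof -
      have "fdiff ({1..n} - {1..r}) ?g {} = ?g {} * (\<Prod>j\<in>{1..n} - {1..r}. 1 - 1 / (real j + 1))"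
        using U by (intro fdiff_product_weight) auto
      also have "\<dots> = (real r + 1) / (real n + 1)"
        unfolding prod_one_minus_inverse_Suc[OF that] using U by (simp add: product_weight_def)
      finally show ?thesis by (simp add: divide_inverse add.commute)
    qed
    then have "\<forall>\<^sub>F n in sequentially. (real r + 1) * inverse (real (Suc n)) = fdiff ({1..n} - {1..r}) ?g {}"
      unfolding eventually_sequentially by blast
    with tendsto_mult_right_zero[OF LIMSEQ_inverse_real_of_nat]
    show "(\<lambda>n. fdiff ({1..n} - {1..r}) ?g {}) \<longlonglongrightarrow> 0"
      by (rule Lim_transform_eventually)
  qed
  assume "?g \<in> A_inf"
  with M U have "(\<lambda>r. limdiff {1..r} ?g {}) \<longlonglongrightarrow> ?g {}"
    by (simp add: A_inf_iff_limdiff)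
  with U show False
    by (simp add: limdiff_0 product_weight_def LIMSEQ_const_iff)
qed

text \<open>Scaled, this weight is \<open>(2/3)\<^sup>n\<close> on each interval \<open>[n]\<close> and zero elsewhere: its upward sums
  are at least \<open>(2/3)\<^sup>n\<close> on all \<open>2\<^sup>n\<close> subsets of \<open>[n]\<close>, so they are not summable.\<close>
definition interval_weight :: "real \<Rightarrow> nat set \<Rightarrow> real" where
  "interval_weight C v = (if v \<in> range (\<lambda>n. {1..n}) then (2/3) ^ card v / C ^ (2 * card v) else 0)"

lemma scaled_interval_weight_atLeastAtMost:
  "C > 0 \<Longrightarrow> scaled C (interval_weight C) {1..n} = (2/3) ^ n"
  by (auto simp: scaled_def interval_weight_def)

lemma scaled_interval_weight_eq_0:
  "v \<notin> range (\<lambda>n. {1..n}) \<Longrightarrow> scaled C (interval_weight C) v = 0"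
  by (simp add: scaled_def interval_weight_def)

lemma interval_weight_in_S_inf:
  assumes "C > 0"
  shows "interval_weight C \<in> S_inf C"
proof -
  have intervals: "range (\<lambda>n. {1..n}) \<subseteq> U_inf"
    by (auto simp: U_inf_eq_UN_Pow)
  then have W: "interval_weight C \<in> W_inf"
    using assms by (auto simp: W_inf_def interval_weight_def)
  have "inj (\<lambda>n::nat. {1..n})"
    by (rule injI) (metis card_atLeastAtMost diff_Suc_1)
  moreover have "(\<lambda>n::nat. (2/3::real) ^ n) summable_on UNIV"
    by (simp add: summable_on_UNIV_nonneg_real_iff summable_geometric)
  ultimately have "scaled C (interval_weight C) summable_on range (\<lambda>n. {1..n})"
    using assms by (simp add: summable_on_reindex o_def scaled_interval_weight_atLeastAtMost)
  moreover have "scaled C (interval_weight C) summable_on U_inf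
      \<longleftrightarrow> scaled C (interval_weight C) summable_on range (\<lambda>n. {1..n})"
    using intervals by (intro summable_on_cong_neutral) (auto simp: scaled_interval_weight_eq_0)
  ultimately show ?thesis using W by (simp add: S_inf_iff)
qed

lemma Tup_interval_weight_notin_P_inf:
  assumes "C > 0"
  shows "Tup C (interval_weight C) \<notin> P_inf"
proof
  let ?g = "Tup C (interval_weight C)"
  have S: "interval_weight C \<in> S_inf C"
    using assms by (rule interval_weight_in_S_inf)
  assume "?g \<in> P_inf"
  then have summable: "?g summable_on U_inf" by (simp add: P_inf_def)
  have "(4/3::real) ^ n \<le> infsum ?g U_inf" for n
  proof -
    have Pow: "Pow {1..n} \<subseteq> U_inf"
      by (auto intro: subset_atLeastAtMost_in_U_inf)
    have "(2/3) ^ n \<le> ?g v" if "v \<subseteq> {1..n}" for v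
    proof -
      have "(2/3::real) ^ n = sum (scaled C (interval_weight C)) {{1..n}}"
        using assms by (simp add: scaled_interval_weight_atLeastAtMost)
      also have "\<dots> \<le> ?g v"
        unfolding Tup_eq_infsum using S that Pow
        by (intro finite_sum_le_infsum) (auto simp: S_inf_iff scaled_nonneg intro: summable_on_subset)
      finally show ?thesis .
    qed
    then have "(\<Sum>v\<in>Pow {1..n}. (2/3::real) ^ n) \<le> sum ?g (Pow {1..n})"
      by (intro sum_mono) auto
    also have "\<dots> \<le> infsum ?g U_inf"
      using Pow Tup_in_M_inf[OF S] by (intro finite_sum_le_infsum summable) (auto intro: M_inf_nonneg)
    finally show ?thesis
      by (simp add: card_Pow power_mult_distrib[symmetric])
  qed
  moreover obtain n where "infsum ?g U_inf < (4/3::real) ^ n"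
    using real_arch_pow[of "4/3"] by auto
  ultimately show False
    using not_le by blast
qed

lemma P_inf_psubset_A_inf: "P_inf \<subset> A_inf"
  using P_inf_subset_A_inf Tup_in_A_inf[OF _ interval_weight_in_S_inf, of 1]
    Tup_interval_weight_notin_P_inf[of 1]
  by auto

lemma A_inf_psubset_N_inf: "A_inf \<subset> N_inf"
proof -
  have "A_inf \<subseteq> N_inf"
    unfolding A_inf_eq_image_Tup[OF zero_less_one] using Tup_in_N_inf by blast
  with product_weight_inverse_Suc_in_N_inf product_weight_inverse_Suc_notin_A_inf show ?thesis
    by blast
qed

lemma N_inf_psubset_M_inf: "N_inf \<subset> M_inf"
proof -
  have "N_inf \<subseteq> M_inf"
    by (auto simp: N_inf_def)
  moreover have "product_weight (\<lambda>_. 1) \<in> M_inf"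
    by (rule product_weight_in_M_inf) simp_all
  ultimately show ?thesis
    using product_weight_one_notin_N_inf by blast
qed

theorem mainTheorem2:
  fixes C :: real
  assumes "C > 0"
  shows "P_inf \<subset> A_inf \<and> A_inf = Tup C ` S_inf C \<and> A_inf \<subset> N_inf \<and> N_inf \<subset> M_inf
    \<and> bij_betw (Tup C) (S_inf C) A_inf
    \<and> (\<forall>g\<in>S_inf C. Tdown C (Tup C g) = g)
    \<and> (\<forall>g\<in>A_inf. Tup C (Tdown C g) = g)
    \<and> Tdown C ` M_inf = S_inf C
    \<and> (\<forall>g\<in>M_inf. (\<forall>u\<in>U_inf. Tup C (Tdown C g) u \<le> g u)
                  \<and> (Tup C (Tdown C g) = g \<longleftrightarrow> g \<in> A_inf))"
proof -
  have "\<forall>g\<in>M_inf. (\<forall>u\<in>U_inf. Tup C (Tdown C g) u \<le> g u)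
      \<and> (Tup C (Tdown C g) = g \<longleftrightarrow> g \<in> A_inf)"
    using assms by (simp add: Tup_Tdown_le A_inf_iff_Tup_Tdown)
  with assms show ?thesis
    by (simp add: P_inf_psubset_A_inf A_inf_eq_image_Tup[symmetric] A_inf_psubset_N_inf
        N_inf_psubset_M_inf bij_betw_Tup Tdown_Tup Tup_Tdown_A_inf image_Tdown_M_inf)
qed

end
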